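(* A real $4\times4$ array $(c_{i,j})_{0\le i,j\le3}$ satisfies the fourteen equations (E0), (R1)–(R9), (O1)–(O4) if and only if there exist real numbers $p=c_{3,2}$, $q=c_{3,3}$, a choice $\mu\in\{\mu_1,\mu_2\}$, a sign $\sigma\in\{+1,-1\}$ and a type $T\in\{A,B\}$ such that the corresponding discriminant is nonnegative and the entries are given as follows. Type A: with $\Delta=\Delta_1$ if $\mu=\mu_1$ and $\Delta=\Delta_2$ if $\mu=\mu_2$ (and $\Delta\ge0$), $c_{2,3}=\tfrac14+2\mu-\tfrac12(p+q)+\tfrac{\sigma}{8}\sqrt{\Delta}$, $c_{2,2}=\tfrac34+4\mu-p-q-c_{2,3}$, $c_{3,1}=\mu-q$, $c_{1,3}=c_{3,1}$. Type B: with $\Delta_3\ge0$, $c_{2,3}=-\tfrac12(p+q)+\tfrac{\sigma}{8}\sqrt{\Delta_3}$, $c_{2,2}=\tfrac14-p-q-c_{2,3}$, $c_{3,1}=\mu-q$, $c_{1,3}=\tfrac12-2q-c_{3,1}$. In both types the remaining ten entries are $c_{0,0}=-c_{3,1}-2c_{3,3}-c_{1,3}+c_{2,2}$, $c_{0,1}=-c_{3,1}-2c_{3,3}+\tfrac12+c_{2,3}-c_{1,3}$, $c_{0,2}=c_{1,3}+c_{3,3}+\tfrac12-c_{2,2}$, $c_{0,3}=c_{3,3}-c_{2,3}+c_{1,3}$, $c_{1,0}=-c_{3,1}-2c_{3,3}+c_{3,2}-c_{1,3}+\tfrac12$, $c_{1,1}=1-c_{1,3}-c_{3,1}-c_{3,3}$,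 $c_{1,2}=-c_{3,2}+c_{1,3}+c_{3,3}+\tfrac12$, $c_{2,0}=c_{3,1}+c_{3,3}-c_{2,2}+\tfrac12$, $c_{2,1}=c_{3,1}+c_{3,3}+\tfrac12-c_{2,3}$, $c_{3,0}=c_{3,1}+c_{3,3}-c_{3,2}$.
   Context: $\mu_1=\frac{1+\sqrt3}{4}$, $\mu_2=\frac{1-\sqrt3}{4}$, and with $p=c_{3,2}$, $q=c_{3,3}$: $\Delta_1=-34-20\sqrt3+32\sqrt3\,q+32\sqrt3\,p-48q^2+32q-32pq+48p-48p^2$; $\Delta_2=-34+20\sqrt3-32\sqrt3\,q-32\sqrt3\,p-48q^2+32q-32pq+48p-48p^2$; $\Delta_3=-48p^2-32pq-48q^2+2-16q$. (E0): $\sum_{i=0}^3\sum_{j=0}^3 c_{i,j}=4$. Regularity equations: (R1) $c_{0,1}+c_{0,3}+c_{2,1}+c_{2,3}=c_{0,0}+c_{0,2}+c_{2,0}+c_{2,2}$; (R2) $c_{1,1}+c_{1,3}+c_{3,1}+c_{3,3}=c_{0,0}+c_{0,2}+c_{2,0}+c_{2,2}$; (R3) $c_{1,0}+c_{1,2}+c_{3,0}+c_{3,2}=c_{0,0}+c_{0,2}+c_{2,0}+c_{2,2}$; (R4) $c_{2,1}+c_{2,3}=c_{2,0}+c_{2,2}$; (R5) $c_{1,1}+c_{1,3}+3c_{3,1}+3c_{3,3}=2c_{2,0}+2c_{2,2}$; (R6) $c_{1,0}+c_{1,2}+3c_{3,0}+3c_{3,2}=2c_{2,0}+2c_{2,2}$;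 (R7) $c_{0,1}+c_{2,1}+3c_{0,3}+3c_{2,3}=2c_{0,2}+2c_{2,2}$; (R8) $c_{1,1}+c_{3,1}+3c_{1,3}+3c_{3,3}=2c_{0,2}+2c_{2,2}$; (R9) $c_{1,2}+c_{3,2}=c_{0,2}+c_{2,2}$. Orthogonality equations: (O1) $\sum_{i=0}^3\sum_{j=0}^3 c_{i,j}^2=4$; (O2) $c_{3,3}c_{1,1}+c_{3,2}c_{1,0}+c_{2,3}c_{0,1}+c_{2,2}c_{0,0}=0$; (O3) $c_{3,3}c_{1,3}+c_{3,2}c_{1,2}+c_{2,3}c_{0,3}+c_{2,2}c_{0,2}+c_{3,1}c_{1,1}+c_{3,0}c_{1,0}+c_{2,1}c_{0,1}+c_{2,0}c_{0,0}=0$; (O4) $c_{3,3}c_{3,1}+c_{3,2}c_{3,0}+c_{2,3}c_{2,1}+c_{2,2}c_{2,0}+c_{1,3}c_{1,1}+c_{1,2}c_{1,0}+c_{0,3}c_{0,1}+c_{0,2}c_{0,0}=0$. *)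

theory Defs
  imports Complex_Main
begin

text \<open>A real 4x4 array is modelled as c :: nat => nat => real; only entries c i j with
  i, j in {0..3} are relevant.\<close>

definition mu1 :: real where "mu1 = (1 + sqrt 3) / 4"
definition mu2 :: real where "mu2 = (1 - sqrt 3) / 4"

definition Delta1 :: "real \<Rightarrow> real \<Rightarrow> real" where
  "Delta1 p q = -34 - 20 * sqrt 3 + 32 * sqrt 3 * q + 32 * sqrt 3 * p - 48 * q^2 + 32 * q
     - 32 * p * q + 48 * p - 48 * p^2"
definition Delta2 :: "real \<Rightarrow> real \<Rightarrow> real" where
  "Delta2 p q = -34 + 20 * sqrt 3 - 32 * sqrt 3 * q - 32 * sqrt 3 * p - 48 * q^2 + 32 * q
     - 32 * p * q + 48 * p - 48 * p^2"
definition Delta3 :: "real \<Rightarrow> real \<Rightarrow> real" where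
  "Delta3 p q = -48 * p^2 - 32 * p * q - 48 * q^2 + 2 - 16 * q"

definition all_equations :: "(nat \<Rightarrow> nat \<Rightarrow> real) \<Rightarrow> bool" where
  "all_equations c \<longleftrightarrow>
    \<comment> \<open>E0\<close>
    (\<Sum>i\<le>3. \<Sum>j\<le>3. c i j) = 4 \<and>
    \<comment> \<open>R1\<close>
    c 0 1 + c 0 3 + c 2 1 + c 2 3 = c 0 0 + c 0 2 + c 2 0 + c 2 2 \<and>
    \<comment> \<open>R2\<close>
    c 1 1 + c 1 3 + c 3 1 + c 3 3 = c 0 0 + c 0 2 + c 2 0 + c 2 2 \<and>
    \<comment> \<open>R3\<close>
    c 1 0 + c 1 2 + c 3 0 + c 3 2 = c 0 0 + c 0 2 + c 2 0 + c 2 2 \<and>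
    \<comment> \<open>R4\<close>
    c 2 1 + c 2 3 = c 2 0 + c 2 2 \<and>
    \<comment> \<open>R5\<close>
    c 1 1 + c 1 3 + 3 * c 3 1 + 3 * c 3 3 = 2 * c 2 0 + 2 * c 2 2 \<and>
    \<comment> \<open>R6\<close>
    c 1 0 + c 1 2 + 3 * c 3 0 + 3 * c 3 2 = 2 * c 2 0 + 2 * c 2 2 \<and>
    \<comment> \<open>R7\<close>
    c 0 1 + c 2 1 + 3 * c 0 3 + 3 * c 2 3 = 2 * c 0 2 + 2 * c 2 2 \<and>
    \<comment> \<open>R8\<close>
    c 1 1 + c 3 1 + 3 * c 1 3 + 3 * c 3 3 = 2 * c 0 2 + 2 * c 2 2 \<and>
    \<comment> \<open>R9\<close>
    c 1 2 + c 3 2 = c 0 2 + c 2 2 \<and>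
    \<comment> \<open>O1\<close>
    (\<Sum>i\<le>3. \<Sum>j\<le>3. (c i j)^2) = 4 \<and>
    \<comment> \<open>O2\<close>
    c 3 3 * c 1 1 + c 3 2 * c 1 0 + c 2 3 * c 0 1 + c 2 2 * c 0 0 = 0 \<and>
    \<comment> \<open>O3\<close>
    c 3 3 * c 1 3 + c 3 2 * c 1 2 + c 2 3 * c 0 3 + c 2 2 * c 0 2
      + c 3 1 * c 1 1 + c 3 0 * c 1 0 + c 2 1 * c 0 1 + c 2 0 * c 0 0 = 0 \<and>
    \<comment> \<open>O4\<close>
    c 3 3 * c 3 1 + c 3 2 * c 3 0 + c 2 3 * c 2 1 + c 2 2 * c 2 0
      + c 1 3 * c 1 1 + c 1 2 * c 1 0 + c 0 3 * c 0 1 + c 0 2 * c 0 0 = 0"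

definition param_form ::
  "(nat \<Rightarrow> nat \<Rightarrow> real) \<Rightarrow> real \<Rightarrow> real \<Rightarrow> real \<Rightarrow> real \<Rightarrow> bool \<Rightarrow> bool" where
  "param_form c p q \<mu> \<sigma> typeA \<longleftrightarrow>
    c 3 2 = p \<and> c 3 3 = q \<and>
    (if typeA then
       (let \<Delta> = (if \<mu> = mu1 then Delta1 p q else Delta2 p q) in
         \<Delta> \<ge> 0 \<and>
         c 2 3 = 1/4 + 2 * \<mu> - (p + q) / 2 + \<sigma> / 8 * sqrt \<Delta> \<and>
         c 2 2 = 3/4 + 4 * \<mu> - p - q - c 2 3 \<and>
         c 3 1 = \<mu> - q \<and>
         c 1 3 = c 3 1)
     else
       Delta3 p q \<ge> 0 \<and>
       c 2 3 = - (p + q) / 2 + \<sigma> / 8 * sqrt (Delta3 p q) \<and>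
       c 2 2 = 1/4 - p - q - c 2 3 \<and>
       c 3 1 = \<mu> - q \<and>
       c 1 3 = 1/2 - 2 * q - c 3 1) \<and>
    c 0 0 = - c 3 1 - 2 * c 3 3 - c 1 3 + c 2 2 \<and>
    c 0 1 = - c 3 1 - 2 * c 3 3 + 1/2 + c 2 3 - c 1 3 \<and>
    c 0 2 = c 1 3 + c 3 3 + 1/2 - c 2 2 \<and>
    c 0 3 = c 3 3 - c 2 3 + c 1 3 \<and>
    c 1 0 = - c 3 1 - 2 * c 3 3 + c 3 2 - c 1 3 + 1/2 \<and>
    c 1 1 = 1 - c 1 3 - c 3 1 - c 3 3 \<and>
    c 1 2 = - c 3 2 + c 1 3 + c 3 3 + 1/2 \<and>
    c 2 0 = c 3 1 + c 3 3 - c 2 2 + 1/2 \<and>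
    c 2 1 = c 3 1 + c 3 3 + 1/2 - c 2 3 \<and>
    c 3 0 = c 3 1 + c 3 3 - c 3 2"

end

theory Submission
  imports Defs
begin

(* The linear equations (E0), (R1)-(R9) leave exactly six entries free, a = c31, b = c13,
   x = c22, y = c23, p = c32, q = c33, and force the other ten to be the affine expressions
   of param_form; completion a b x y p q is that array. For it, linear combinations of
   (O1)-(O4) become: 8 mu^2 - 4 mu - 1 = 0 for mu = a + q, so mu is mu1 or mu2;
   (a - b) (1 - 2 (a + b) - 4 q) = 0, which separates type A (b = a) from type B;
   an equation that, once the type is fixed, is linear in x; and (O2) itself, which after
   eliminating x reads (8 (y - y0))^2 = Delta for the discriminant Delta of the type.
   Its two roots y = y0 + sigma sqrt Delta / 8 account for the sign sigma. *)

definition completion :: "real \<Rightarrow> real \<Rightarrow> real \<Rightarrow> real \<Rightarrow> real \<Rightarrow> real \<Rightarrow> nat \<Rightarrow> nat \<Rightarrow> real" where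
  "completion a b x y p q i j =
     [[x - a - b - 2 * q,       y - a - b - 2 * q + 1/2, b + q - x + 1/2, b + q - y],
      [p - a - b - 2 * q + 1/2, 1 - a - b - q,           b + q - p + 1/2, b],
      [a + q - x + 1/2,         a + q - y + 1/2,         x,               y],
      [a + q - p,               a,                       p,               q]] ! i ! j"

abbreviation completion_of :: "(nat \<Rightarrow> nat \<Rightarrow> real) \<Rightarrow> nat \<Rightarrow> nat \<Rightarrow> real" where
  "completion_of c \<equiv> completion (c 3 1) (c 1 3) (c 2 2) (c 2 3) (c 3 2) (c 3 3)"

definition same_block :: "(nat \<Rightarrow> nat \<Rightarrow> real) \<Rightarrow> (nat \<Rightarrow> nat \<Rightarrow> real) \<Rightarrow> bool" where
  "same_block c d \<longleftrightarrow> (\<forall>i\<le>3. \<forall>j\<le>3. c i j = d i j)"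

lemma sum_atMost_3: "(\<Sum>i\<le>(3::nat). f i) = f 0 + f 1 + f 2 + (f 3 :: real)"
  by (simp add: eval_nat_numeral)

lemma all_atMost_3_iff: "(\<forall>i\<le>(3::nat). P i) \<longleftrightarrow> P 0 \<and> P 1 \<and> P 2 \<and> P 3"
  by (auto simp: le_Suc_eq numeral_3_eq_3 numeral_2_eq_2)

lemma same_block_all_equations_iff:
  assumes "same_block c d"
  shows "all_equations c \<longleftrightarrow> all_equations d"
proof -
  have "c i j = d i j" if "i \<le> 3" "j \<le> 3" for i j
    using assms that unfolding same_block_def by blast
  then show ?thesis
    unfolding all_equations_def sum_atMost_3 by simp
qed

lemma same_block_param_form_iff:
  assumes "same_block c d"
  shows "param_form c p q \<mu> \<sigma> T \<longleftrightarrow> param_form d p q \<mu> \<sigma> T"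
proof -
  have "c i j = d i j" if "i \<le> 3" "j \<le> 3" for i j
    using assms that unfolding same_block_def by blast
  then show ?thesis
    unfolding param_form_def by simp
qed

lemma all_equations_same_block_completion:
  assumes "all_equations c"
  shows "same_block c (completion_of c)"
  using assms unfolding all_equations_def same_block_def all_atMost_3_iff sum_atMost_3
  by (simp add: completion_def)

lemma param_form_same_block_completion:
  assumes "param_form c p q \<mu> \<sigma> T"
  shows "same_block c (completion_of c)"
  using assms unfolding param_form_def same_block_def all_atMost_3_iff
  by (simp add: completion_def)

lemma all_equations_iff_completion_of:
  "all_equations c \<longleftrightarrow> same_block c (completion_of c) \<and> all_equations (completion_of c)"
proof
  assume eqs: "all_equations c"
  then have same: "same_block c (completion_of c)"
    by (rule all_equations_same_block_completion)
  from same eqs show "same_block c (completion_of c) \<and> all_equations (completion_of c)"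
    unfolding same_block_all_equations_iff[OF same] ..
next
  assume "same_block c (completion_of c) \<and> all_equations (completion_of c)"
  then show "all_equations c"
    using same_block_all_equations_iff[of c "completion_of c"] by blast
qed

lemma ex_param_form_iff_completion_of:
  "(\<exists>p q. param_form c p q \<mu> \<sigma> T) \<longleftrightarrow>
     same_block c (completion_of c) \<and> param_form (completion_of c) (c 3 2) (c 3 3) \<mu> \<sigma> T"
proof
  assume "\<exists>p q. param_form c p q \<mu> \<sigma> T"
  then obtain p q where pf: "param_form c p q \<mu> \<sigma> T"
    by blast
  then have same: "same_block c (completion_of c)"
    by (rule param_form_same_block_completion)
  from pf have "c 3 2 = p" "c 3 3 = q"
    unfolding param_form_def by simp_all
  with pf have "param_form c (c 3 2) (c 3 3) \<mu> \<sigma> T"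
    by simp
  with same show "same_block c (completion_of c) \<and> param_form (completion_of c) (c 3 2) (c 3 3) \<mu> \<sigma> T"
    unfolding same_block_param_form_iff[OF same] ..
next
  assume "same_block c (completion_of c) \<and> param_form (completion_of c) (c 3 2) (c 3 3) \<mu> \<sigma> T"
  then have "param_form c (c 3 2) (c 3 3) \<mu> \<sigma> T"
    using same_block_param_form_iff[of c "completion_of c"] by blast
  then show "\<exists>p q. param_form c p q \<mu> \<sigma> T"
    by blast
qed

lemma recombine_four_equations:
  fixes u v w z :: real
  assumes "u - 4 + 2 * z = e1 - e1'" "w - z = 2 * (e2 - e2')" "w + 2 * v = e3 - e3'"
    "v = e4 - e4'"
  shows "(u = 4 \<and> v = 0 \<and> w = 0 \<and> z = 0) \<longleftrightarrow> (e1 = e1' \<and> e2 = e2' \<and> e3 = e3' \<and> e4 = e4')"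
  using assms by auto

(* The four equations are (O1) + 2 (O4), ((O3) - (O4)) / 2, (O3) + 2 (O2) and (O2);
   the linear equations hold identically for the completion. *)
lemma all_equations_completion_iff_system:
  "all_equations (completion a b x y p q) \<longleftrightarrow>
     8 * (a + q)^2 - 4 * (a + q) - 1 = 0 \<and>
     (a - b) * (1 - 2 * (a + b) - 4 * q) = 0 \<and>
     x + y + p + q + a - b + 1/4 = 4 * (a + q) * (a + b + 2 * q) \<and>
     x * (x - a - b - 2 * q) + y * (y - a - b - 2 * q + 1/2) + p * (p - a - b - 2 * q + 1/2)
       + q * (1 - a - b - q) = 0"
  unfolding all_equations_def sum_atMost_3
  by (simp add: completion_def del: mult_eq_0_iff) (rule recombine_four_equations; algebra)

lemma mu1_mu2_roots_iff: "8 * t^2 - 4 * t - 1 = 0 \<longleftrightarrow> t \<in> {mu1, mu2}"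
proof -
  have "8 * t^2 - 4 * t - 1 = 8 * ((t - mu1) * (t - mu2))"
    unfolding mu1_def mu2_def by (simp add: field_simps power2_eq_square)
  then show ?thesis by auto
qed

definition DeltaA :: "real \<Rightarrow> real \<Rightarrow> real \<Rightarrow> real" where
  "DeltaA p q \<mu> = -48 * p^2 - 32 * p * q + 128 * p * \<mu> + 16 * p - 48 * q^2 + 128 * q * \<mu>
     - 80 * \<mu> - 14"

lemma DeltaA_mu1_mu2:
  assumes "\<mu> \<in> {mu1, mu2}"
  shows "(if \<mu> = mu1 then Delta1 p q else Delta2 p q) = DeltaA p q \<mu>"
proof -
  have "DeltaA p q mu1 = Delta1 p q" "DeltaA p q mu2 = Delta2 p q"
    unfolding DeltaA_def Delta1_def Delta2_def mu1_def mu2_def by (simp_all add: field_simps)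
  with assms show ?thesis by auto
qed

lemma signed_sqrt_iff:
  fixes y c D k :: real
  assumes "k \<noteq> 0"
  shows "(\<exists>\<sigma>\<in>{1, -1}. 0 \<le> D \<and> y = c + \<sigma> / k * sqrt D) \<longleftrightarrow> (k * (y - c))^2 = D"
proof
  assume "(k * (y - c))^2 = D"
  then have "0 \<le> D" and sqrt_D: "sqrt D = \<bar>k * (y - c)\<bar>"
    by auto
  have "y = c + 1 / k * sqrt D \<or> y = c + -1 / k * sqrt D"
    unfolding sqrt_D using assms by (cases "0 \<le> k * (y - c)") (auto simp: field_simps)
  with \<open>0 \<le> D\<close> show "\<exists>\<sigma>\<in>{1, -1}. 0 \<le> D \<and> y = c + \<sigma> / k * sqrt D"
    by blast
qed (use assms in \<open>auto simp: power_mult_distrib power_divide\<close>)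

lemma all_equations_completion_iff:
  "all_equations (completion a b x y p q) \<longleftrightarrow>
     a + q \<in> {mu1, mu2} \<and>
     (b = a \<and> x = 3/4 + 4 * (a + q) - p - q - y \<and>
        (8 * (y - (1/4 + 2 * (a + q) - (p + q) / 2)))^2 = DeltaA p q (a + q) \<or>
      b = 1/2 - 2 * q - a \<and> x = 1/4 - p - q - y \<and>
        (8 * (y + (p + q) / 2))^2 = Delta3 p q)"
  (is "_ \<longleftrightarrow> _ \<and> (?A \<or> ?B)")
proof -
  let ?x_eqn = "x + y + p + q + a - b + 1/4 = 4 * (a + q) * (a + b + 2 * q)"
  let ?O2 = "x * (x - a - b - 2 * q) + y * (y - a - b - 2 * q + 1/2)
    + p * (p - a - b - 2 * q + 1/2) + q * (1 - a - b - q)"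
  have type_split: "(a - b) * (1 - 2 * (a + b) - 4 * q) = 0 \<longleftrightarrow> b = a \<or> b = 1/2 - 2 * q - a"
    by auto
  have "?x_eqn \<and> ?O2 = 0 \<longleftrightarrow> ?A" if "a + q \<in> {mu1, mu2}" and "b = a"
  proof -
    have root: "8 * (a + q)^2 - 4 * (a + q) - 1 = 0"
      using that mu1_mu2_roots_iff by blast
    then have "4 * (a + q) * (a + b + 2 * q) = 4 * (a + q) + 1"
      using \<open>b = a\<close> by algebra
    then have x_eqn_iff: "?x_eqn \<longleftrightarrow> x = 3/4 + 4 * (a + q) - p - q - y"
      using \<open>b = a\<close> by auto
    have O2_iff: "?O2 = 0 \<longleftrightarrow> (8 * (y - (1/4 + 2 * (a + q) - (p + q) / 2)))^2 = DeltaA p q (a + q)"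
      if "x = 3/4 + 4 * (a + q) - p - q - y"
    proof -
      have "(8 * (y - (1/4 + 2 * (a + q) - (p + q) / 2)))^2 - DeltaA p q (a + q) = 32 * ?O2"
        using that root \<open>b = a\<close> unfolding DeltaA_def by algebra
      then show ?thesis by auto
    qed
    from x_eqn_iff O2_iff \<open>b = a\<close> show ?thesis
      by blast
  qed
  moreover have "?x_eqn \<and> ?O2 = 0 \<longleftrightarrow> ?B" if "b = 1/2 - 2 * q - a"
  proof -
    have "a + b + 2 * q = 1/2"
      using that by simp
    then have x_eqn_iff: "?x_eqn \<longleftrightarrow> x = 1/4 - p - q - y"
      using that by auto
    have O2_iff: "?O2 = 0 \<longleftrightarrow> (8 * (y + (p + q) / 2))^2 = Delta3 p q"
      if "x = 1/4 - p - q - y"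
    proof -
      have "(8 * (y + (p + q) / 2))^2 - Delta3 p q = 32 * ?O2"
        using that \<open>b = 1/2 - 2 * q - a\<close> unfolding Delta3_def by algebra
      then show ?thesis by auto
    qed
    from x_eqn_iff O2_iff that show ?thesis
      by blast
  qed
  ultimately show ?thesis
    unfolding all_equations_completion_iff_system type_split mu1_mu2_roots_iff
    by blast
qed

lemma param_form_completion_iff:
  assumes "\<mu> \<in> {mu1, mu2}"
  shows "param_form (completion a b x y p q) p q \<mu> \<sigma> T \<longleftrightarrow>
    (if T then
       0 \<le> DeltaA p q \<mu> \<and> y = 1/4 + 2 * \<mu> - (p + q) / 2 + \<sigma> / 8 * sqrt (DeltaA p q \<mu>) \<and>
       x = 3/4 + 4 * \<mu> - p - q - y \<and> a = \<mu> - q \<and> b = a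
     else
       0 \<le> Delta3 p q \<and> y = - (p + q) / 2 + \<sigma> / 8 * sqrt (Delta3 p q) \<and>
       x = 1/4 - p - q - y \<and> a = \<mu> - q \<and> b = 1/2 - 2 * q - a)"
  unfolding param_form_def DeltaA_mu1_mu2[OF assms] Let_def
  by (simp add: completion_def)

lemma ex_param_form_completion_iff:
  assumes "\<mu> \<in> {mu1, mu2}"
  shows "(\<exists>\<sigma>\<in>{1, -1}. \<exists>T. param_form (completion a b x y p q) p q \<mu> \<sigma> T) \<longleftrightarrow>
    a = \<mu> - q \<and>
    (b = a \<and> x = 3/4 + 4 * \<mu> - p - q - y \<and>
       (8 * (y - (1/4 + 2 * \<mu> - (p + q) / 2)))^2 = DeltaA p q \<mu> \<or>
     b = 1/2 - 2 * q - a \<and> x = 1/4 - p - q - y \<and>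
       (8 * (y + (p + q) / 2))^2 = Delta3 p q)"
proof -
  have "(8::real) \<noteq> 0" by simp
  note signed_sqrt = signed_sqrt_iff[OF this]
  have minus_minus: "z - - (p + q) / 2 = z + (p + q) / 2" for z :: real
    by linarith
  show ?thesis
    unfolding param_form_completion_iff[OF assms] ex_bool_eq if_True if_False
    using signed_sqrt[where c = "1/4 + 2 * \<mu> - (p + q) / 2" and D = "DeltaA p q \<mu>"]
      signed_sqrt[where c = "- (p + q) / 2" and D = "Delta3 p q", unfolded minus_minus]
    by blast
qed

lemma all_equations_completion_iff_param_form:
  "all_equations (completion a b x y p q) \<longleftrightarrow>
     (\<exists>\<mu> \<sigma> T. \<mu> \<in> {mu1, mu2} \<and> \<sigma> \<in> {1, -1} \<and> param_form (completion a b x y p q) p q \<mu> \<sigma> T)"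
proof -
  have "(\<exists>\<mu> \<sigma> T. \<mu> \<in> {mu1, mu2} \<and> \<sigma> \<in> {1, -1} \<and> param_form (completion a b x y p q) p q \<mu> \<sigma> T)
      \<longleftrightarrow> (\<exists>\<mu>\<in>{mu1, mu2}. \<exists>\<sigma>\<in>{1, -1}. \<exists>T. param_form (completion a b x y p q) p q \<mu> \<sigma> T)"
    by blast
  also have "\<dots> \<longleftrightarrow> (\<exists>\<mu>\<in>{mu1, mu2}. a = \<mu> - q \<and>
      (b = a \<and> x = 3/4 + 4 * \<mu> - p - q - y \<and>
         (8 * (y - (1/4 + 2 * \<mu> - (p + q) / 2)))^2 = DeltaA p q \<mu> \<or>
       b = 1/2 - 2 * q - a \<and> x = 1/4 - p - q - y \<and>
         (8 * (y + (p + q) / 2))^2 = Delta3 p q))"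
    by (rule bex_cong[OF refl ex_param_form_completion_iff])
  also have "\<dots> \<longleftrightarrow> all_equations (completion a b x y p q)"
  proof -
    have "(\<exists>\<mu>\<in>S. a = \<mu> - q \<and> P \<mu>) \<longleftrightarrow> a + q \<in> S \<and> P (a + q)" for S P
      by (auto simp: eq_diff_eq)
    then show ?thesis
      unfolding all_equations_completion_iff .
  qed
  finally show ?thesis ..
qed

theorem mainTheorem9:
  fixes c :: "nat \<Rightarrow> nat \<Rightarrow> real"
  shows "all_equations c \<longleftrightarrow>
    (\<exists>p q \<mu> \<sigma> typeA. \<mu> \<in> {mu1, mu2} \<and> \<sigma> \<in> {1, -1} \<and>
       param_form c p q \<mu> \<sigma> typeA)"
proof -
  have "(\<exists>p q \<mu> \<sigma> T. \<mu> \<in> {mu1, mu2} \<and> \<sigma> \<in> {1, -1} \<and> param_form c p q \<mu> \<sigma> T) \<longleftrightarrow>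
      (\<exists>\<mu> \<sigma> T. \<mu> \<in> {mu1, mu2} \<and> \<sigma> \<in> {1, -1} \<and> (\<exists>p q. param_form c p q \<mu> \<sigma> T))"
    by blast
  then show ?thesis
    unfolding all_equations_iff_completion_of[of c] ex_param_form_iff_completion_of
      all_equations_completion_iff_param_form
    by blast
qed

end
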